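(* Let $K=[k_1,\dots,k_m]\subseteq\{1,\dots,n\}$ be an interval of $m$ consecutive integers $k_1<\dots<k_m$, and let $\delta_K=\prod_{1\le i<j\le m}\big(1-\frac{x_{k_i}}{x_{k_j}}\big)\prod_{1\le r<s\le m}\big(1-\frac{1}{x_{k_r}x_{k_s}}\big)$. Then for every $\alpha\in\mathbb Z^m$, $$\mathrm H_G\big(\delta_K\,x_{k_1}^{\alpha_1}\cdots x_{k_m}^{\alpha_m}\big)=u^G_\alpha .$$
   Context: $G\in\{Sp_{2n},SO_{2n},SO_{2n+1}\}$; $h^G_k$ ($k\in\mathbb Z$) are elements of the ring $\Lambda$ of symmetric functions with $h^G_k=s^G_{(k)}$ (Koike–Terada universal character) for $k\ge0$ and $h^G_k=0$ for $k<0$. $\mathrm H_G$ is the $\mathbb Z$-linear map from the Laurent polynomial ring $\mathbb Z[x_1^{\pm1},\dots,x_n^{\pm1}]$ to $\Lambda$ sending $x^\beta=x_1^{\beta_1}\cdots x_n^{\beta_n}$ to $h^G_{\beta_1}h^G_{\beta_2}\cdots h^G_{\beta_n}$ (it is not a ring homomorphism). For $\alpha\in\mathbb Z^m$, $u^G_\alpha$ is the $m\times m$ determinant whose $(i,1)$ entry is $h^G_{\alpha_i-i+1}$ and whose $(i,j)$ entry for $2\le j\le m$ is $h^G_{\alpha_i-i+j}+h^G_{\alpha_i-i-j+2}$. *)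

theory Defs
  imports "HOL-Library.Poly_Mapping" "HOL-Combinatorics.Permutations"
begin

(* Lambda = Z[h_1,h_2,...]: integer polynomials in the generators h_1,h_2,... *)
type_synonym sym_fun = "(nat \<Rightarrow>\<^sub>0 nat) \<Rightarrow>\<^sub>0 int"

(* Laurent polynomials: monomials x^beta with beta :: nat \<Rightarrow>\<^sub>0 int (variable j = x_j) *)
type_synonym laurent = "(nat \<Rightarrow>\<^sub>0 int) \<Rightarrow>\<^sub>0 int"

definition hsym :: "int \<Rightarrow> sym_fun" where
  "hsym k = (if k < 0 then 0 else if k = 0 then 1
             else Poly_Mapping.single (Poly_Mapping.single (nat k) 1) 1)"

datatype group_type = Sp_even | SO_even | SO_odd

(* one-row Koike--Terada universal characters: sp_(k) = h_k, o_(k) = h_k - h_(k-2) *)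
definition hG :: "group_type \<Rightarrow> int \<Rightarrow> sym_fun" where
  "hG G k = (if k < 0 then 0 else
      (case G of Sp_even \<Rightarrow> hsym k
               | SO_even \<Rightarrow> hsym k - hsym (k - 2)
               | SO_odd \<Rightarrow> hsym k - hsym (k - 2)))"

definition xpow :: "nat \<Rightarrow> int \<Rightarrow> laurent" where
  "xpow j e = Poly_Mapping.single (Poly_Mapping.single j e) 1"

definition H_G :: "group_type \<Rightarrow> nat \<Rightarrow> laurent \<Rightarrow> sym_fun" where
  "H_G G n f = (\<Sum>\<beta>\<in>Poly_Mapping.keys f.
       of_int (Poly_Mapping.lookup f \<beta>) * (\<Prod>i\<in>{1..n}. hG G (Poly_Mapping.lookup \<beta> i)))"

definition det_m :: "nat \<Rightarrow> (nat \<Rightarrow> nat \<Rightarrow> 'a::comm_ring_1) \<Rightarrow> 'a" where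
  "det_m m M = (\<Sum>\<sigma> | \<sigma> permutes {1..m}. of_int (sign \<sigma>) * (\<Prod>i\<in>{1..m}. M i (\<sigma> i)))"

definition u_G :: "group_type \<Rightarrow> nat \<Rightarrow> (nat \<Rightarrow> int) \<Rightarrow> sym_fun" where
  "u_G G m \<alpha> = det_m m (\<lambda>i j.
      if j = 1 then hG G (\<alpha> i - int i + 1)
      else hG G (\<alpha> i - int i + int j) + hG G (\<alpha> i - int i - int j + 2))"

(* delta_K for K = [k_1..k_m] with k_i = k0 + i *)
definition delta_K :: "nat \<Rightarrow> nat \<Rightarrow> laurent" where
  "delta_K k0 m =
     (\<Prod>(i,j)\<in>{(i,j). 1 \<le> i \<and> i < j \<and> j \<le> m}. 1 - xpow (k0+i) 1 * xpow (k0+j) (-1)) *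
     (\<Prod>(r,s)\<in>{(r,s). 1 \<le> r \<and> r < s \<and> s \<le> m}. 1 - xpow (k0+r) (-1) * xpow (k0+s) (-1))"

end

theory Submission
  imports Defs "Jordan_Normal_Form.Determinant"
begin

text \<open>With \<open>z = x + x\<^sup>-\<^sup>1\<close> one has \<open>(1 - x\<^sub>i/x\<^sub>j)(1 - 1/(x\<^sub>ix\<^sub>j)) = x\<^sub>j\<^sup>-\<^sup>1 (z\<^sub>j - z\<^sub>i)\<close>, so
  \<open>\<delta>\<^sub>K\<close> is a monomial times the Vandermonde determinant in \<open>z\<^sub>k\<^sub>1, \<dots>, z\<^sub>k\<^sub>m\<close>. Column operations
  with the monic polynomials \<open>P\<^sub>j\<close> satisfying \<open>P\<^sub>j(x + x\<^sup>-\<^sup>1) = x\<^sup>j + x\<^sup>-\<^sup>j\<close> turn it into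
  \<open>det(x\<^sub>k\<^sub>i\<^sup>j\<^sup>-\<^sup>1 + x\<^sub>k\<^sub>i\<^sup>1\<^sup>-\<^sup>j)\<close>, with \<open>1\<close> in the first column. After multiplying by \<open>x\<^sup>\<alpha>\<close> each row of
  this determinant involves a single variable. \<open>H\<^sub>G\<close> is not multiplicative, but it is multiplicative
  on products of Laurent polynomials in disjoint sets of variables, so it can be applied entry by entry,
  and the entries become exactly those of \<open>u\<^sup>G\<^sub>\<alpha>\<close>.\<close>

lemma det_monic_poly_columns:
  fixes z :: "nat \<Rightarrow> 'a::comm_ring_1" and p :: "nat \<Rightarrow> 'a poly"
  assumes degree: "\<And>j. degree (p j) \<le> j" and monic: "\<And>j. coeff (p j) j = 1"
  shows "det (mat n n (\<lambda>(i,j). poly (p j) (z i))) = det (mat n n (\<lambda>(i,j). z i ^ j))"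
proof -
  define V where "V = mat n n (\<lambda>(i,j). z i ^ j)"
  define U where "U = mat n n (\<lambda>(k,j). coeff (p j) k)"
  have V: "V \<in> carrier_mat n n" and U: "U \<in> carrier_mat n n"
    by (auto simp: V_def U_def)
  have coeff_above: "coeff (p j) k = 0" if "j < k" for j k
    using degree[of j] that by (intro coeff_eq_0) simp
  have "poly (p j) (z i) = (\<Sum>k<n. z i ^ k * coeff (p j) k)" if "j < n" for i j
  proof -
    have "poly (p j) (z i) = (\<Sum>k\<le>degree (p j). coeff (p j) k * z i ^ k)"
      by (simp add: poly_altdef)
    also have "\<dots> = (\<Sum>k<n. z i ^ k * coeff (p j) k)"
      using degree[of j] that
      by (intro sum.mono_neutral_cong_left) (auto simp: coeff_eq_0)
    finally show ?thesis .
  qed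
  then have "V * U = mat n n (\<lambda>(i,j). poly (p j) (z i))"
    by (intro eq_matI) (auto simp: V_def U_def scalar_prod_def lessThan_atLeast0)
  moreover have "det U = 1"
  proof -
    have "upper_triangular U"
      by (auto simp: upper_triangular_def U_def coeff_above)
    then show ?thesis
      using det_upper_triangular[OF _ U] by (simp add: prod_list_diag_prod U_def monic)
  qed
  ultimately show ?thesis
    using det_mult[OF V U] by (simp add: V_def)
qed

lemma prod_linear_factors_monic:
  "degree (\<Prod>k<j. [:- z k, 1:]) \<le> j \<and> coeff (\<Prod>k<j. [:- z k, 1:]) j = 1"
proof (induction j)
  case (Suc j)
  let ?p = "\<Prod>k<j. [:- z k, 1:]"
  have "(\<Prod>k<Suc j. [:- z k, 1:]) = smult (- z j) ?p + pCons 0 ?p"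
    by simp
  with Suc show ?case
    by (auto intro!: degree_le simp: coeff_eq_0)
qed simp

lemma det_vandermonde:
  fixes z :: "nat \<Rightarrow> 'a::comm_ring_1"
  shows "det (mat n n (\<lambda>(i,j). z i ^ j)) = (\<Prod>i<n. \<Prod>k<i. z i - z k)"
proof -
  define p where "p j = (\<Prod>k<j. [:- z k, 1:])" for j
  have "det (mat n n (\<lambda>(i,j). z i ^ j)) = det (mat n n (\<lambda>(i,j). poly (p j) (z i)))"
    using prod_linear_factors_monic[where z = z]
    by (intro det_monic_poly_columns[symmetric]) (auto simp: p_def)
  also have "\<dots> = (\<Prod>i<n. poly (p i) (z i))"
    \<comment> \<open>the node polynomial \<open>p j\<close> vanishes at \<open>z 0, \<dots>, z (j - 1)\<close>\<close>
    by (subst det_lower_triangular[of n])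
       (auto simp: p_def poly_prod prod_list_diag_prod lessThan_atLeast0 intro!: prod_zero)
  also have "\<dots> = (\<Prod>i<n. \<Prod>k<i. z i - z k)"
    by (simp add: p_def poly_prod)
  finally show ?thesis .
qed

lemma det_m_eq_det: "det_m m M = det (mat m m (\<lambda>(i,j). M (Suc i) (Suc j)))"
proof -
  have Suc: "bij_betw Suc {0..<m} {1..m}"
    by (rule bij_betw_byWitness[of _ "\<lambda>x. x - 1"]) auto
  have pred: "bij_betw (\<lambda>x. x - 1) {1..m} {0..<m}"
    by (rule bij_betw_byWitness[of _ Suc]) auto
  let ?lift = "map_permutation {0..<m} Suc"
  have "det (mat m m (\<lambda>(i,j). M (Suc i) (Suc j))) =
     (\<Sum>p | p permutes {0..<m}. of_int (sign p) * (\<Prod>i\<in>{0..<m}. M (Suc i) (Suc (p i))))"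
    by (subst det_def'[of _ m]) (auto intro!: sum.cong prod.cong simp: permutes_in_image)
  also have "\<dots> = det_m m M"
    unfolding det_m_def
  proof (rule sum.reindex_bij_witness[of _ "map_permutation {1..m} (\<lambda>x. x - 1)" ?lift])
    fix p assume p: "p \<in> {p. p permutes {0..<m}}"
    show "map_permutation {1..m} (\<lambda>x. x - 1) (?lift p) = p"
      by (rule map_permutation_compose_inv) (use p Suc in auto)
    show "?lift p \<in> {\<sigma>. \<sigma> permutes {1..m}}"
      using map_permutation_permutes[OF Suc] p by auto
    have "(\<Prod>i\<in>{1..m}. M i (?lift p i)) = (\<Prod>i\<in>{0..<m}. M (Suc i) (?lift p (Suc i)))"
      using prod.reindex_bij_betw[OF Suc, of "\<lambda>i. M i (?lift p i)"] by simp
    also have "\<dots> = (\<Prod>i\<in>{0..<m}. M (Suc i) (Suc (p i)))"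
      by (rule prod.cong) (auto simp: map_permutation_apply)
    moreover have "sign (?lift p) = sign p"
      by (rule sign_map_permutation) (use p in auto)
    ultimately show "of_int (sign (?lift p)) * (\<Prod>i\<in>{1..m}. M i (?lift p i))
       = of_int (sign p) * (\<Prod>i\<in>{0..<m}. M (Suc i) (Suc (p i)))"
      by simp
  next
    fix \<sigma> assume \<sigma>: "\<sigma> \<in> {\<sigma>. \<sigma> permutes {1..m}}"
    show "?lift (map_permutation {1..m} (\<lambda>x. x - 1) \<sigma>) = \<sigma>"
      by (rule map_permutation_compose_inv[OF pred]) (use \<sigma> in auto)
    show "map_permutation {1..m} (\<lambda>x. x - 1) \<sigma> \<in> {p. p permutes {0..<m}}"
      using map_permutation_permutes[OF pred] \<sigma> by auto
  qed
  finally show ?thesis ..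
qed

lemma det_m_cong:
  assumes "\<And>i j. i \<in> {1..m} \<Longrightarrow> j \<in> {1..m} \<Longrightarrow> M i j = N i j"
  shows "det_m m M = det_m m N"
proof -
  have "(\<Prod>i\<in>{1..m}. M i (\<sigma> i)) = (\<Prod>i\<in>{1..m}. N i (\<sigma> i))" if \<sigma>: "\<sigma> permutes {1..m}" for \<sigma>
  proof (rule prod.cong)
    fix i assume "i \<in> {1..m}"
    then show "M i (\<sigma> i) = N i (\<sigma> i)"
      using assms permutes_in_image[OF \<sigma>] by blast
  qed simp
  then show ?thesis
    unfolding det_m_def by (intro sum.cong) auto
qed

lemma det_m_mult_rows:
  "(\<Prod>i\<in>{1..m}. c i) * det_m m M = det_m m (\<lambda>i j. c i * M i j)"
  unfolding det_m_def sum_distrib_left prod.distrib by (simp add: ac_simps)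

lemma det_m_monic_poly_columns:
  fixes z :: "nat \<Rightarrow> 'a::comm_ring_1" and p :: "nat \<Rightarrow> 'a poly"
  assumes "\<And>j. degree (p j) \<le> j" and "\<And>j. coeff (p j) j = 1"
  shows "det_m m (\<lambda>i j. poly (p (j - 1)) (z i)) = (\<Prod>j\<in>{1..m}. \<Prod>i\<in>{1..<j}. z j - z i)"
proof -
  have "det_m m (\<lambda>i j. poly (p (j - 1)) (z i)) = det (mat m m (\<lambda>(i,j). poly (p j) (z (Suc i))))"
    by (simp add: det_m_eq_det)
  also have "\<dots> = (\<Prod>i<m. \<Prod>k<i. z (Suc i) - z (Suc k))"
    using assms by (simp add: det_monic_poly_columns det_vandermonde)
  also have "\<dots> = (\<Prod>j\<in>{1..m}. \<Prod>i\<in>{1..<j}. z j - z i)"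
  proof -
    have "(\<Prod>k<j. z (Suc j) - z (Suc k)) = (\<Prod>i\<in>{1..<Suc j}. z (Suc j) - z i)" for j
      by (simp add: prod.atLeast1_atMost_eq atLeastLessThanSuc_atLeastAtMost)
    then show ?thesis
      by (simp add: prod.atLeast1_atMost_eq)
  qed
  finally show ?thesis .
qed

lemma xpow_mult: "xpow v a * xpow v b = xpow v (a + b)"
  by (simp add: xpow_def mult_single single_add)

lemma xpow_0 [simp]: "xpow v 0 = 1"
  by (simp add: xpow_def)

lemma xpow_power: "xpow v a ^ k = xpow v (int k * a)"
  by (induction k) (auto simp: xpow_mult algebra_simps)

definition xpow_sym :: "nat \<Rightarrow> nat \<Rightarrow> laurent" where
  "xpow_sym v j = (if j = 0 then 1 else xpow v (int j) + xpow v (- int j))"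

text \<open>Vieta--Lucas polynomials, except that \<open>lucas_poly 0 = 1\<close> rather than \<open>2\<close>, which makes
  all of them monic.\<close>

fun lucas_poly :: "nat \<Rightarrow> 'a::comm_ring_1 poly" where
  "lucas_poly 0 = 1"
| "lucas_poly (Suc 0) = [:0, 1:]"
| "lucas_poly (Suc (Suc 0)) = [:-2, 0, 1:]"
| "lucas_poly (Suc (Suc (Suc j))) = [:0, 1:] * lucas_poly (Suc (Suc j)) - lucas_poly (Suc j)"

lemma lucas_poly_monic:
  "degree (lucas_poly j :: 'a::comm_ring_1 poly) \<le> j \<and> coeff (lucas_poly j :: 'a poly) j = 1"
proof (induction j rule: lucas_poly.induct)
  case (4 j)
  then have "coeff (lucas_poly (Suc j) :: 'a poly) k = 0" if "Suc j < k" for k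
    using that by (meson coeff_eq_0 le_less_trans)
  with 4 show ?case
    by (auto intro!: degree_le simp: coeff_pCons coeff_eq_0 split: nat.split)
qed (auto intro!: degree_le simp: coeff_pCons split: nat.split)

lemma poly_lucas_poly: "poly (lucas_poly j) (xpow_sym v 1) = xpow_sym v j"
proof (induction j rule: lucas_poly.induct)
  case 3
  have "xpow_sym v 1 * xpow_sym v 1 = xpow v 2 + xpow v (-2) + 2"
    by (simp add: xpow_sym_def algebra_simps xpow_mult)
  then show ?case by (simp add: xpow_sym_def algebra_simps)
next
  case (4 j)
  have "xpow_sym v 1 * xpow_sym v (Suc (Suc j)) = xpow_sym v (Suc (Suc (Suc j))) + xpow_sym v (Suc j)"
    by (simp add: xpow_sym_def algebra_simps xpow_mult)
  with 4 show ?case by (simp add: algebra_simps)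
qed (simp_all add: xpow_sym_def)

lemma one_minus_mult_one_minus:
  fixes a a' b b' :: "'a::comm_ring_1"
  assumes "a * a' = 1" "b * b' = 1"
  shows "(1 - a * b') * (1 - a' * b') = b' * ((b + b') - (a + a'))"
proof -
  have "(1 - a * b') * (1 - a' * b') = 1 - a * b' - a' * b' + (a * a') * (b' * b')"
    by (simp add: algebra_simps)
  also have "\<dots> = b * b' - a * b' - a' * b' + b' * b'"
    using assms by simp
  finally show ?thesis by (simp add: algebra_simps)
qed

lemma prod_ordered_pairs:
  "(\<Prod>(i,j)\<in>{(i,j). 1 \<le> i \<and> i < j \<and> j \<le> m}. f i j) = (\<Prod>j\<in>{1..m}. \<Prod>i\<in>{1..<j}. f i (j::nat))"
proof -
  have "{(i,j). 1 \<le> i \<and> i < j \<and> j \<le> m} = (\<lambda>(j,i). (i,j)) ` (SIGMA j:{1..m}. {1..<j})"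
    by (auto simp: image_iff)
  moreover have "inj_on (\<lambda>(j,i). (i,j)) (SIGMA j:{1..m}. {1..<j})"
    by (auto simp: inj_on_def)
  ultimately show ?thesis
    by (simp add: prod.reindex prod.Sigma case_prod_unfold)
qed

lemma delta_K_eq_det_m:
  "delta_K k0 m = (\<Prod>j\<in>{1..m}. xpow (k0+j) (1 - int j)) * det_m m (\<lambda>i j. xpow_sym (k0+i) (j - 1))"
proof -
  let ?Z = "\<lambda>i. xpow_sym (k0+i) 1"
  have "(1 - xpow (k0+i) 1 * xpow (k0+j) (-1)) * (1 - xpow (k0+i) (-1) * xpow (k0+j) (-1))
        = xpow (k0+j) (-1) * (?Z j - ?Z i)" for i j
    unfolding xpow_sym_def by (simp add: one_minus_mult_one_minus xpow_mult)
  then have "delta_K k0 m = (\<Prod>(i,j)\<in>{(i,j). 1 \<le> i \<and> i < j \<and> j \<le> m}. xpow (k0+j) (-1) * (?Z j - ?Z i))"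
    unfolding delta_K_def prod.distrib[symmetric] by (simp add: case_prod_unfold)
  also have "\<dots> = (\<Prod>j\<in>{1..m}. \<Prod>i\<in>{1..<j}. xpow (k0+j) (-1) * (?Z j - ?Z i))"
    by (rule prod_ordered_pairs)
  also have "\<dots> = (\<Prod>j\<in>{1..m}. xpow (k0+j) (1 - int j)) * (\<Prod>j\<in>{1..m}. \<Prod>i\<in>{1..<j}. ?Z j - ?Z i)"
    by (simp add: prod.distrib xpow_power of_nat_diff)
  also have "(\<Prod>j\<in>{1..m}. \<Prod>i\<in>{1..<j}. ?Z j - ?Z i) = det_m m (\<lambda>i j. poly (lucas_poly (j - 1)) (?Z i))"
    using lucas_poly_monic by (intro det_m_monic_poly_columns[symmetric]) auto
  also have "\<dots> = det_m m (\<lambda>i j. xpow_sym (k0+i) (j - 1))"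
    by (simp only: poly_lucas_poly)
  finally show ?thesis .
qed

definition vars :: "(('v \<Rightarrow>\<^sub>0 'e::zero) \<Rightarrow>\<^sub>0 'c::zero) \<Rightarrow> 'v set" where
  "vars f = (\<Union>\<beta>\<in>Poly_Mapping.keys f. Poly_Mapping.keys \<beta>)"

lemma vars_mult: "vars (f * g) \<subseteq> vars f \<union> vars g"
  unfolding vars_def using keys_mult[of f g] keys_add by fastforce

lemma vars_add: "vars (f + g) \<subseteq> vars f \<union> vars g"
  unfolding vars_def using keys_add[of f g] by auto

lemma vars_one [simp]: "vars 1 = {}"
  by (simp add: vars_def)

lemma vars_prod: "vars (\<Prod>i\<in>I. f i) \<subseteq> (\<Union>i\<in>I. vars (f i))"
  by (induction I rule: infinite_finite_induct) (use vars_mult in fastforce)+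

lemma vars_xpow: "vars (xpow v a) \<subseteq> {v}"
  by (simp add: vars_def xpow_def)

lemma vars_xpow_sym: "vars (xpow_sym v j) \<subseteq> {v}"
  using vars_add[of "xpow v (int j)" "xpow v (- int j)"] vars_xpow[of v]
  by (auto simp: xpow_sym_def)

lemma vars_xpow_mult_xpow_sym: "vars (xpow v a * xpow_sym v j) \<subseteq> {v}"
  using vars_mult[of "xpow v a" "xpow_sym v j"] vars_xpow[of v a] vars_xpow_sym[of v j] by blast

definition hG_monomial :: "group_type \<Rightarrow> nat \<Rightarrow> (nat \<Rightarrow>\<^sub>0 int) \<Rightarrow> sym_fun" where
  "hG_monomial G n \<beta> = (\<Prod>i\<in>{1..n}. hG G (Poly_Mapping.lookup \<beta> i))"

lemma hG_0 [simp]: "hG G 0 = 1"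
  by (cases G) (auto simp: hG_def hsym_def)

lemma hG_monomial_add:
  assumes "Poly_Mapping.keys \<beta> \<inter> Poly_Mapping.keys \<gamma> = {}"
  shows "hG_monomial G n (\<beta> + \<gamma>) = hG_monomial G n \<beta> * hG_monomial G n \<gamma>"
proof -
  have "hG G (Poly_Mapping.lookup (\<beta> + \<gamma>) i) = hG G (Poly_Mapping.lookup \<beta> i) * hG G (Poly_Mapping.lookup \<gamma> i)" for i
  proof -
    have "Poly_Mapping.lookup \<beta> i = 0 \<or> Poly_Mapping.lookup \<gamma> i = 0"
      using assms by (auto simp: in_keys_iff)
    then show ?thesis by (auto simp: lookup_add)
  qed
  then show ?thesis
    by (simp add: hG_monomial_def prod.distrib)
qed

lemma hG_monomial_single:
  assumes "v \<in> {1..n}"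
  shows "hG_monomial G n (Poly_Mapping.single v a) = hG G a"
  unfolding hG_monomial_def using assms
  by (subst prod.remove[of _ v]) (auto simp: lookup_single intro!: prod.neutral)

lemma H_G_eq_sum:
  assumes "finite S" "Poly_Mapping.keys f \<subseteq> S"
  shows "H_G G n f = (\<Sum>\<beta>\<in>S. of_int (Poly_Mapping.lookup f \<beta>) * hG_monomial G n \<beta>)"
  unfolding H_G_def hG_monomial_def
  by (rule sum.mono_neutral_left) (use assms in \<open>auto simp: in_keys_iff\<close>)

lemma H_G_single: "H_G G n (Poly_Mapping.single \<beta> c) = of_int c * hG_monomial G n \<beta>"
  by (subst H_G_eq_sum[of "{\<beta>}"]) auto

lemma H_G_0 [simp]: "H_G G n 0 = 0"
  by (simp add: H_G_def)

lemma H_G_1 [simp]: "H_G G n 1 = 1"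
  by (simp add: H_G_def)

lemma H_G_add: "H_G G n (f + g) = H_G G n f + H_G G n g"
proof -
  let ?S = "Poly_Mapping.keys f \<union> Poly_Mapping.keys g"
  have "H_G G n (f + g) = (\<Sum>\<beta>\<in>?S. of_int (Poly_Mapping.lookup (f + g) \<beta>) * hG_monomial G n \<beta>)"
    using keys_add[of f g] by (intro H_G_eq_sum) auto
  also have "\<dots> = (\<Sum>\<beta>\<in>?S. of_int (Poly_Mapping.lookup f \<beta>) * hG_monomial G n \<beta>)
     + (\<Sum>\<beta>\<in>?S. of_int (Poly_Mapping.lookup g \<beta>) * hG_monomial G n \<beta>)"
    by (simp add: lookup_add sum.distrib algebra_simps)
  also have "\<dots> = H_G G n f + H_G G n g"
    by (subst (1 2) H_G_eq_sum[of ?S]) auto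
  finally show ?thesis .
qed

lemma H_G_uminus: "H_G G n (- f) = - H_G G n f"
  unfolding H_G_def by (simp add: sum_negf)

lemma H_G_diff: "H_G G n (f - g) = H_G G n f - H_G G n g"
  using H_G_add[of G n f "- g"] by (simp add: H_G_uminus)

lemma H_G_sum: "H_G G n (\<Sum>i\<in>I. f i) = (\<Sum>i\<in>I. H_G G n (f i))"
  by (induction I rule: infinite_finite_induct) (auto simp: H_G_add)

lemma H_G_of_int_mult: "H_G G n (of_int c * f) = of_int c * H_G G n f"
proof (induction f rule: frag_induction[OF subset_UNIV])
  case (2 \<beta>)
  have "(of_int c :: laurent) * Poly_Mapping.single \<beta> 1 = Poly_Mapping.single \<beta> c"
    by (simp add: mult_single flip: single_of_int)
  then show ?case by (simp add: H_G_single)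
qed (simp_all add: right_diff_distrib H_G_diff)

lemma H_G_monomial_mult:
  assumes "Poly_Mapping.keys \<beta> \<inter> vars g = {}"
  shows "H_G G n (Poly_Mapping.single \<beta> 1 * g) = hG_monomial G n \<beta> * H_G G n g"
proof -
  have "Poly_Mapping.keys g \<subseteq> {\<gamma>. Poly_Mapping.keys \<beta> \<inter> Poly_Mapping.keys \<gamma> = {}}"
    using assms by (auto simp: vars_def)
  then show ?thesis
  proof (induction g rule: frag_induction)
    case (one \<gamma>) then show ?case by (simp add: mult_single H_G_single hG_monomial_add)
  qed (simp_all add: right_diff_distrib H_G_diff)
qed

lemma H_G_mult:
  assumes "vars f \<inter> vars g = {}"
  shows "H_G G n (f * g) = H_G G n f * H_G G n g"
proof -
  have "Poly_Mapping.keys f \<subseteq> {\<beta>. Poly_Mapping.keys \<beta> \<inter> vars g = {}}"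
    using assms by (auto simp: vars_def)
  then show ?thesis
  proof (induction f rule: frag_induction)
    case (one \<beta>) then show ?case by (simp add: H_G_monomial_mult H_G_single)
  qed (simp_all add: left_diff_distrib H_G_diff)
qed

lemma H_G_prod:
  assumes "disjoint_family_on (\<lambda>i. vars (f i)) I"
  shows "H_G G n (\<Prod>i\<in>I. f i) = (\<Prod>i\<in>I. H_G G n (f i))"
  using assms
proof (induction I rule: infinite_finite_induct)
  case (insert i I)
  have "vars (f i) \<inter> vars (\<Prod>j\<in>I. f j) = {}"
    using vars_prod[of f I] insert.hyps(2) insert.prems
    by (fastforce simp: disjoint_family_on_def)
  with insert show ?case
    by (simp add: H_G_mult disjoint_family_on_insert)
qed simp_all

lemma H_G_xpow: "v \<in> {1..n} \<Longrightarrow> H_G G n (xpow v a) = hG G a"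
  by (simp add: xpow_def H_G_single hG_monomial_single)

lemma H_G_xpow_mult_xpow_sym:
  assumes "v \<in> {1..n}" and "1 \<le> j"
  shows "H_G G n (xpow v (a + 1) * xpow_sym v (j - 1)) =
    (if j = 1 then hG G (a + 1) else hG G (a + int j) + hG G (a - int j + 2))"
proof (cases "j = 1")
  case False
  with assms have "H_G G n (xpow v (a + 1) * xpow_sym v (j - 1)) =
      hG G (a + 1 + int (j - 1)) + hG G (a + 1 - int (j - 1))"
    by (simp add: xpow_sym_def ring_distribs xpow_mult H_G_add H_G_xpow)
  with assms False show ?thesis
    by (simp add: of_nat_diff algebra_simps)
qed (use assms in \<open>simp add: xpow_sym_def H_G_xpow\<close>)

lemma H_G_det_m:
  assumes "inj_on v {1..m}" and "\<And>i j. i \<in> {1..m} \<Longrightarrow> vars (M i j) \<subseteq> {v i}"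
  shows "H_G G n (det_m m M) = det_m m (\<lambda>i j. H_G G n (M i j))"
proof -
  have disjoint: "disjoint_family_on (\<lambda>i. vars (M i (\<sigma> i))) {1..m}" for \<sigma>
    unfolding disjoint_family_on_def
  proof (intro ballI impI)
    fix i i' assume "i \<in> {1..m}" "i' \<in> {1..m}" "i \<noteq> i'"
    then have "v i \<noteq> v i'"
      using assms(1) by (auto dest: inj_onD)
    then show "vars (M i (\<sigma> i)) \<inter> vars (M i' (\<sigma> i')) = {}"
      using assms(2)[OF \<open>i \<in> {1..m}\<close>, of "\<sigma> i"] assms(2)[OF \<open>i' \<in> {1..m}\<close>, of "\<sigma> i'"] by blast
  qed
  show ?thesis
    unfolding det_m_def H_G_sum H_G_of_int_mult H_G_prod[OF disjoint] ..
qed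

lemma delta_K_mult_monomial:
  "delta_K k0 m * (\<Prod>i\<in>{1..m}. xpow (k0+i) (\<alpha> i)) =
     det_m m (\<lambda>i j. xpow (k0+i) (\<alpha> i - int i + 1) * xpow_sym (k0+i) (j - 1))"
proof -
  have "delta_K k0 m * (\<Prod>i\<in>{1..m}. xpow (k0+i) (\<alpha> i)) =
     ((\<Prod>i\<in>{1..m}. xpow (k0+i) (1 - int i)) * (\<Prod>i\<in>{1..m}. xpow (k0+i) (\<alpha> i))) *
     det_m m (\<lambda>i j. xpow_sym (k0+i) (j - 1))"
    unfolding delta_K_eq_det_m by (simp only: mult_ac)
  also have "(\<Prod>i\<in>{1..m}. xpow (k0+i) (1 - int i)) * (\<Prod>i\<in>{1..m}. xpow (k0+i) (\<alpha> i)) =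
     (\<Prod>i\<in>{1..m}. xpow (k0+i) (\<alpha> i - int i + 1))"
    by (simp add: xpow_mult algebra_simps flip: prod.distrib)
  also have "\<dots> * det_m m (\<lambda>i j. xpow_sym (k0+i) (j - 1)) =
     det_m m (\<lambda>i j. xpow (k0+i) (\<alpha> i - int i + 1) * xpow_sym (k0+i) (j - 1))"
    by (rule det_m_mult_rows)
  finally show ?thesis .
qed

theorem mainTheorem8:
  fixes G :: group_type and n m k0 :: nat and \<alpha> :: "nat \<Rightarrow> int"
  assumes "k0 + m \<le> n"
  shows "H_G G n (delta_K k0 m * (\<Prod>i\<in>{1..m}. xpow (k0+i) (\<alpha> i))) = u_G G m \<alpha>"
proof -
  let ?M = "\<lambda>i j. xpow (k0+i) (\<alpha> i - int i + 1) * xpow_sym (k0+i) (j - 1)"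
  have "H_G G n (delta_K k0 m * (\<Prod>i\<in>{1..m}. xpow (k0+i) (\<alpha> i))) = H_G G n (det_m m ?M)"
    by (simp only: delta_K_mult_monomial)
  also have "\<dots> = det_m m (\<lambda>i j. H_G G n (?M i j))"
    using vars_xpow_mult_xpow_sym by (intro H_G_det_m[where v = "\<lambda>i. k0 + i"]) (auto simp: inj_on_def)
  also have "\<dots> = u_G G m \<alpha>"
    unfolding u_G_def by (intro det_m_cong H_G_xpow_mult_xpow_sym) (use assms in auto)
  finally show ?thesis .
qed

end
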